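(* Let $X,Y$ be real Hilbert spaces, let $A\in\mathcal{L}(X,Y)$ be a compact operator with singular system $\{(\sigma_i,u_i,v_i)\}_i$, and let $\alpha>0$. Let $B_\alpha=\sum_i\beta_i^\alpha v_iu_i^*$ with $\beta_i^\alpha=\frac{\sigma_i}{2}+\sqrt{\frac{\sigma_i^2}{4}-\alpha}$ if $\sigma_i\ge 2\sqrt\alpha$ and $\beta_i^\alpha=\sqrt\alpha$ if $\sigma_i<2\sqrt\alpha$, and define $K_\alpha:Y\to X$ by $$K_\alpha(y)=x(B_\alpha,y)=(B_\alpha^*B_\alpha+\alpha I)^{-1}B_\alpha^*y .$$ Then $K_\alpha(y)=\sum_i \frac{F_\alpha(\sigma_i)}{\sigma_i}\langle y,v_i\rangle\,u_i$ for all $y\in Y$, where $$F_\alpha(\sigma)=\begin{cases}1, & \sigma\ge 2\sqrt\alpha,\\ \frac{\sigma}{2\sqrt\alpha}, & \sigma<2\sqrt\alpha,\end{cases}$$ and $(K_\alpha)_{\alpha>0}$ is an order optimal regularization method with filter $F_\alpha$: for every $\nu>0$ there exist constants $\gamma,c_1,c_2,c_3>0$ (independent of $\alpha$) such that for all $\alpha>0$: (1) $\sup_{\sigma>0}|F_\alpha(\sigma)\sigma^{-1}|\le c_1\alpha^{-\gamma}$; (2) $\sup_{\sigma>0}|1-F_\alpha(\sigma)|\sigma^{\nu}<c_2\alpha^{\gamma\nu}$; (3) $|F_\alpha(\sigma)|\le c_3$ for all $\sigma>0$.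
   Context: A singular system of the compact operator $A$ means: $\sigma_i>0$, $\{u_i\}$ orthonormal in $X$, $\{v_i\}$ orthonormal in $Y$, $Au_i=\sigma_i v_i$, $A^*v_i=\sigma_i u_i$, $A=\sum_i\sigma_iv_iu_i^*$. For $v\in Y,u\in X$, $vu^*$ denotes the map $x\mapsto\langle u,x\rangle v$. $x(B,y)$ is the unique minimizer of $\tfrac12\|Bx-y\|^2+\tfrac\alpha2\|x\|^2$. The conditions (1)–(3) are the paper's (standard filter-based) definition of an order optimal regularization filter for source exponent $\nu$. *)

theory Defs
  imports "HOL-Analysis.Analysis"
begin

definition compact_operator :: "('a::real_normed_vector \<Rightarrow> 'b::real_normed_vector) \<Rightarrow> bool" where
  "compact_operator A \<longleftrightarrow> bounded_linear A \<and> compact (closure (A ` ball 0 1))"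

text \<open>Singular system of A indexed by the set I (sigma_i > 0, u, v orthonormal families,
  A u_i = sigma_i v_i, A^* v_i = sigma_i u_i (written as <A x, v_i> = sigma_i <u_i, x> for all x),
  and A = sum_i sigma_i v_i u_i^* (pointwise convergence).\<close>
definition singular_system ::
  "('a::real_inner \<Rightarrow> 'b::real_inner) \<Rightarrow> 'i set \<Rightarrow> ('i \<Rightarrow> real) \<Rightarrow> ('i \<Rightarrow> 'a) \<Rightarrow> ('i \<Rightarrow> 'b) \<Rightarrow> bool" where
  "singular_system A I \<sigma> u v \<longleftrightarrow>
     (\<forall>i\<in>I. \<sigma> i > 0) \<and>
     (\<forall>i\<in>I. \<forall>j\<in>I. inner (u i) (u j) = (if i = j then 1 else 0)) \<and>
     (\<forall>i\<in>I. \<forall>j\<in>I. inner (v i) (v j) = (if i = j then 1 else 0)) \<and>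
     (\<forall>i\<in>I. A (u i) = \<sigma> i *\<^sub>R v i) \<and>
     (\<forall>i\<in>I. \<forall>x. inner (A x) (v i) = \<sigma> i * inner (u i) x) \<and>
     (\<forall>x. ((\<lambda>i. (\<sigma> i * inner (u i) x) *\<^sub>R v i) has_sum A x) I)"

definition beta :: "real \<Rightarrow> real \<Rightarrow> real" where
  "beta \<alpha> s = (if s \<ge> 2 * sqrt \<alpha> then s / 2 + sqrt (s\<^sup>2 / 4 - \<alpha>) else sqrt \<alpha>)"

definition B_op ::
  "'i set \<Rightarrow> ('i \<Rightarrow> real) \<Rightarrow> ('i \<Rightarrow> 'a::real_inner) \<Rightarrow> ('i \<Rightarrow> 'b::real_inner) \<Rightarrow> real \<Rightarrow> 'a \<Rightarrow> 'b" where
  "B_op I \<sigma> u v \<alpha> x = infsum (\<lambda>i. (beta \<alpha> (\<sigma> i) * inner (u i) x) *\<^sub>R v i) I"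

definition tik_min :: "('a::real_normed_vector \<Rightarrow> 'b::real_normed_vector) \<Rightarrow> real \<Rightarrow> 'b \<Rightarrow> 'a" where
  "tik_min B \<alpha> y = (THE x. \<forall>z. (norm (B x - y))\<^sup>2 / 2 + \<alpha> / 2 * (norm x)\<^sup>2
                              \<le> (norm (B z - y))\<^sup>2 / 2 + \<alpha> / 2 * (norm z)\<^sup>2)"

definition K_op ::
  "'i set \<Rightarrow> ('i \<Rightarrow> real) \<Rightarrow> ('i \<Rightarrow> 'a::real_inner) \<Rightarrow> ('i \<Rightarrow> 'b::real_inner) \<Rightarrow> real \<Rightarrow> 'b \<Rightarrow> 'a" where
  "K_op I \<sigma> u v \<alpha> y = tik_min (B_op I \<sigma> u v \<alpha>) \<alpha> y"

definition filt :: "real \<Rightarrow> real \<Rightarrow> real" where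
  "filt \<alpha> s = (if s \<ge> 2 * sqrt \<alpha> then 1 else s / (2 * sqrt \<alpha>))"

end

theory Submission
  imports Defs
begin

(* B_alpha is diagonal in the singular system of A, and so is its Tikhonov solution: through the
   normal equation B^*(B x - y) + alpha x = 0, which characterises the minimiser, the coefficient
   of u_i in x(B_alpha, y) is beta_i / (beta_i^2 + alpha) <y, v_i>.  Above the threshold
   2 sqrt alpha, beta_i is a root of beta^2 - sigma_i beta + alpha = 0, so this coefficient is
   F_alpha(sigma_i) / sigma_i.  Compactness of A is used only through sigma_i <= norm A, which makes
   the series defining B_alpha converge.  The filter bounds hold with gamma = 1/2, c1 = c3 = 1 and
   c2 = 2^nu + 1. *)

definition orthonormal_on :: "('i \<Rightarrow> 'a::real_inner) \<Rightarrow> 'i set \<Rightarrow> bool" where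
  "orthonormal_on e I \<longleftrightarrow> (\<forall>i\<in>I. \<forall>j\<in>I. inner (e i) (e j) = (if i = j then 1 else 0))"

lemma norm_sum_orthonormal_squared:
  assumes "orthonormal_on e I" "finite F" "F \<subseteq> I"
  shows "(norm (\<Sum>i\<in>F. a i *\<^sub>R e i))\<^sup>2 = (\<Sum>i\<in>F. (a i)\<^sup>2)"
proof -
  have "(norm (\<Sum>i\<in>F. a i *\<^sub>R e i))\<^sup>2 = (\<Sum>i\<in>F. \<Sum>j\<in>F. a i * (a j * inner (e j) (e i)))"
    by (simp add: power2_norm_eq_inner inner_sum_left inner_sum_right sum_distrib_left)
  also have "\<dots> = (\<Sum>i\<in>F. \<Sum>j\<in>F. if i = j then a i * a j else 0)"
    using assms unfolding orthonormal_on_def by (intro sum.cong refl) (auto simp: subset_iff)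
  also have "\<dots> = (\<Sum>i\<in>F. (a i)\<^sup>2)"
    using assms(2) by (simp add: power2_eq_square)
  finally show ?thesis .
qed

lemma bessel_inequality_finite:
  assumes "orthonormal_on e I" "finite F" "F \<subseteq> I"
  shows "(\<Sum>i\<in>F. (inner (e i) x)\<^sup>2) \<le> (norm x)\<^sup>2"
proof -
  define p where "p = (\<Sum>i\<in>F. inner (e i) x *\<^sub>R e i)"
  have "inner x p = (\<Sum>i\<in>F. (inner (e i) x)\<^sup>2)"
    unfolding p_def by (simp add: inner_sum_right power2_eq_square inner_commute)
  moreover have "(norm p)\<^sup>2 = (\<Sum>i\<in>F. (inner (e i) x)\<^sup>2)"
    unfolding p_def by (rule norm_sum_orthonormal_squared[OF assms])
  moreover have "0 \<le> (norm (x - p))\<^sup>2" by simp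
  then have "0 \<le> (norm x)\<^sup>2 - 2 * inner x p + (norm p)\<^sup>2"
    by (simp add: power2_norm_eq_inner inner_diff_left inner_diff_right inner_commute)
  ultimately show ?thesis by linarith
qed

lemma summable_on_CauchyI:
  fixes f :: "'i \<Rightarrow> 'a::{real_normed_vector, complete_space}"
  assumes small_tails: "\<And>\<epsilon>. \<epsilon> > 0 \<Longrightarrow>
    \<exists>F0. finite F0 \<and> F0 \<subseteq> I \<and> (\<forall>F. finite F \<and> F \<subseteq> I - F0 \<longrightarrow> norm (sum f F) < \<epsilon>)"
  shows "f summable_on I"
proof -
  have "\<exists>P. eventually P (finite_subsets_at_top I) \<and>
          (\<forall>F F'. P F \<and> P F' \<longrightarrow> dist (sum f F) (sum f F') < \<epsilon>)" if "\<epsilon> > 0" for \<epsilon>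
  proof -
    obtain F0 where F0: "finite F0" "F0 \<subseteq> I"
      and tail: "\<And>F. finite F \<Longrightarrow> F \<subseteq> I - F0 \<Longrightarrow> norm (sum f F) < \<epsilon> / 2"
      using small_tails[of "\<epsilon> / 2"] \<open>\<epsilon> > 0\<close> by auto
    define P where "P F \<longleftrightarrow> finite F \<and> F0 \<subseteq> F \<and> F \<subseteq> I" for F
    have "dist (sum f F) (sum f F') < \<epsilon>" if "P F" "P F'" for F F'
    proof -
      have "sum f F - sum f F' = sum f (F - F0) - sum f (F' - F0)"
        using that unfolding P_def by (simp add: sum_diff)
      then have "dist (sum f F) (sum f F') \<le> norm (sum f (F - F0)) + norm (sum f (F' - F0))"
        by (simp add: dist_norm norm_triangle_ineq4)
      also have "\<dots> < \<epsilon> / 2 + \<epsilon> / 2"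
        using that unfolding P_def by (intro add_strict_mono tail) auto
      finally show ?thesis by simp
    qed
    moreover have "eventually P (finite_subsets_at_top I)"
      unfolding eventually_finite_subsets_at_top P_def using F0 by blast
    ultimately show ?thesis by blast
  qed
  then have "cauchy_filter (filtermap (sum f) (finite_subsets_at_top I))"
    by (simp add: cauchy_filter_metric_filtermap)
  moreover have "complete (UNIV :: 'a set)"
    by (meson Cauchy_convergent UNIV_I complete_def convergent_def)
  ultimately obtain L where "(sum f \<longlongrightarrow> L) (finite_subsets_at_top I)"
    using complete_uniform[where S = UNIV] by (force simp: filterlim_def)
  then show ?thesis
    unfolding summable_on_def has_sum_def by blast
qed

lemma summable_on_orthonormal_expansion:
  fixes e :: "'i \<Rightarrow> 'a::{real_inner, complete_space}"
  assumes orth: "orthonormal_on e I" and square_summable: "(\<lambda>i. (a i)\<^sup>2) summable_on I"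
  shows "(\<lambda>i. a i *\<^sub>R e i) summable_on I"
proof (rule summable_on_CauchyI)
  fix \<epsilon> :: real assume "\<epsilon> > 0"
  define S where "S = (\<Sum>\<^sub>\<infinity>i\<in>I. (a i)\<^sup>2)"
  obtain F0 where F0: "finite F0" "F0 \<subseteq> I" "dist (\<Sum>i\<in>F0. (a i)\<^sup>2) S \<le> \<epsilon>\<^sup>2 / 2"
    using infsum_finite_approximation[OF square_summable, of "\<epsilon>\<^sup>2 / 2"] \<open>\<epsilon> > 0\<close>
    unfolding S_def by auto
  have "0 < \<epsilon>\<^sup>2"
    using \<open>\<epsilon> > 0\<close> by simp
  then have small_rest: "S - (\<Sum>i\<in>F0. (a i)\<^sup>2) < \<epsilon>\<^sup>2"
    using abs_le_D2[OF F0(3)[unfolded dist_real_def]] by linarith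
  have "norm (\<Sum>i\<in>F. a i *\<^sub>R e i) < \<epsilon>" if F: "finite F" "F \<subseteq> I - F0" for F
  proof -
    have "(norm (\<Sum>i\<in>F. a i *\<^sub>R e i))\<^sup>2 = (\<Sum>i\<in>F. (a i)\<^sup>2)"
      using F by (intro norm_sum_orthonormal_squared[OF orth]) auto
    also have "\<dots> = (\<Sum>i\<in>F \<union> F0. (a i)\<^sup>2) - (\<Sum>i\<in>F0. (a i)\<^sup>2)"
      using F F0 by (subst sum.union_disjoint) auto
    also have "\<dots> \<le> S - (\<Sum>i\<in>F0. (a i)\<^sup>2)"
      unfolding S_def
      by (intro diff_right_mono finite_sum_le_infsum[OF square_summable]) (use F F0 in auto)
    finally have "(norm (\<Sum>i\<in>F. a i *\<^sub>R e i))\<^sup>2 < \<epsilon>\<^sup>2"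
      using small_rest by linarith
    then show ?thesis
      by (rule power_less_imp_less_base) (use \<open>\<epsilon> > 0\<close> in simp)
  qed
  then show "\<exists>F0. finite F0 \<and> F0 \<subseteq> I \<and>
      (\<forall>F. finite F \<and> F \<subseteq> I - F0 \<longrightarrow> norm (\<Sum>i\<in>F. a i *\<^sub>R e i) < \<epsilon>)"
    using F0(1,2) by blast
qed

lemma summable_on_scaled_coefficients_squared:
  assumes "orthonormal_on e I" "\<And>i. i \<in> I \<Longrightarrow> \<bar>c i\<bar> \<le> M"
  shows "(\<lambda>i. (c i * inner (e i) x)\<^sup>2) summable_on I"
proof (rule nonneg_bdd_above_summable_on)
  have "(\<Sum>i\<in>F. (c i * inner (e i) x)\<^sup>2) \<le> M\<^sup>2 * (norm x)\<^sup>2" if F: "finite F" "F \<subseteq> I" for F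
  proof -
    have "(c i)\<^sup>2 \<le> M\<^sup>2" if "i \<in> I" for i
      using power_mono[OF assms(2)[OF that] abs_ge_zero, of 2] by simp
    then have "(\<Sum>i\<in>F. (c i * inner (e i) x)\<^sup>2) \<le> (\<Sum>i\<in>F. M\<^sup>2 * (inner (e i) x)\<^sup>2)"
      using F unfolding power_mult_distrib by (auto intro!: sum_mono mult_right_mono)
    also have "\<dots> \<le> M\<^sup>2 * (norm x)\<^sup>2"
      using bessel_inequality_finite[OF assms(1) F] by (simp add: sum_distrib_left[symmetric] mult_left_mono)
    finally show ?thesis .
  qed
  then show "bdd_above (sum (\<lambda>i. (c i * inner (e i) x)\<^sup>2) ` {F. F \<subseteq> I \<and> finite F})"
    by (intro bdd_aboveI2) auto
qed simp

lemma has_sum_orthonormal_coefficient: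
  assumes "orthonormal_on e I" "((\<lambda>i. a i *\<^sub>R e i) has_sum s) I" "j \<in> I"
  shows "inner (e j) s = a j"
proof -
  have "((\<lambda>i. inner (e j) (a i *\<^sub>R e i)) has_sum inner (e j) s) I"
    by (rule has_sum_bounded_linear[OF bounded_linear_inner_right assms(2)])
  moreover have "((\<lambda>i. inner (e j) (a i *\<^sub>R e i)) has_sum t) I \<longleftrightarrow> (a has_sum t) {j}" for t
    using assms(1,3) unfolding orthonormal_on_def
    by (intro has_sum_cong_neutral) (auto simp: inner_commute)
  moreover have "(a has_sum a j) {j}"
    by (rule has_sum_finiteI) auto
  ultimately show ?thesis
    using has_sum_unique by blast
qed

lemma has_sum_bounded_diagonal:
  fixes u :: "'i \<Rightarrow> 'a::real_inner" and v :: "'i \<Rightarrow> 'b::{real_inner, complete_space}"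
  assumes "orthonormal_on u I" "orthonormal_on v I" "\<And>i. i \<in> I \<Longrightarrow> \<bar>c i\<bar> \<le> M"
  shows "((\<lambda>i. (c i * inner (u i) x) *\<^sub>R v i) has_sum (\<Sum>\<^sub>\<infinity>i\<in>I. (c i * inner (u i) x) *\<^sub>R v i)) I"
  using summable_on_orthonormal_expansion[OF assms(2)
      summable_on_scaled_coefficients_squared[OF assms(1,3)]]
  by (rule has_sum_infsum)

(* B need not be linear: the normal equation alone cancels the cross terms when the functional is
   expanded around x. *)
lemma tik_min_eqI:
  fixes B :: "'a::real_inner \<Rightarrow> 'b::real_inner"
  assumes "0 < \<alpha>" and normal_equation: "\<And>z. inner (B x - y) (B z) + \<alpha> * inner x z = 0"
  shows "tik_min B \<alpha> y = x"
proof -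
  define J where "J w = (norm (B w - y))\<^sup>2 / 2 + \<alpha> / 2 * (norm w)\<^sup>2" for w
  have J_expand: "J z = J x + (norm (B z - B x))\<^sup>2 / 2 + \<alpha> / 2 * (norm (z - x))\<^sup>2" for z
  proof -
    define t1 where "t1 = inner (B x - y) (B z - B x)"
    define t2 where "t2 = inner x (z - x)"
    have cross: "t1 + \<alpha> * t2 = 0"
      using normal_equation[of z] normal_equation[of x] unfolding t1_def t2_def
      by (simp add: inner_diff_right algebra_simps)
    have "(norm (B z - y))\<^sup>2 = (norm (B x - y))\<^sup>2 + 2 * t1 + (norm (B z - B x))\<^sup>2"
      using dot_norm[of "B x - y" "B z - B x"] unfolding t1_def by simp
    moreover have "(norm z)\<^sup>2 = (norm x)\<^sup>2 + 2 * t2 + (norm (z - x))\<^sup>2"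
      using dot_norm[of x "z - x"] unfolding t2_def by simp
    ultimately have "J z = J x + (norm (B z - B x))\<^sup>2 / 2 + \<alpha> / 2 * (norm (z - x))\<^sup>2 + (t1 + \<alpha> * t2)"
      unfolding J_def by (simp add: algebra_simps)
    with cross show ?thesis
      by simp
  qed
  show ?thesis
    unfolding tik_min_def J_def[symmetric]
  proof (rule the_equality)
    have "0 \<le> (norm (B z - B x))\<^sup>2 / 2 + \<alpha> / 2 * (norm (z - x))\<^sup>2" for z
      using \<open>0 < \<alpha>\<close> by simp
    then show "\<forall>z. J x \<le> J z"
      using J_expand by (metis le_add_same_cancel1 add.assoc)
  next
    fix w assume "\<forall>z. J w \<le> J z"
    then have "J w \<le> J x"
      by blast
    moreover have "0 \<le> (norm (B w - B x))\<^sup>2 / 2"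
      by simp
    ultimately have "\<alpha> / 2 * (norm (w - x))\<^sup>2 \<le> 0"
      using J_expand[of w] by linarith
    then show "w = x"
      using \<open>0 < \<alpha>\<close> by (simp add: mult_le_0_iff)
  qed
qed

lemma tik_min_diagonal_operator:
  fixes u :: "'i \<Rightarrow> 'a::{real_inner, complete_space}" and v :: "'i \<Rightarrow> 'b::{real_inner, complete_space}"
  assumes u: "orthonormal_on u I" and v: "orthonormal_on v I"
    and bounded: "\<And>i. i \<in> I \<Longrightarrow> \<bar>\<beta> i\<bar> \<le> M" and "0 < \<alpha>"
  shows "((\<lambda>i. (\<beta> i / ((\<beta> i)\<^sup>2 + \<alpha>) * inner y (v i)) *\<^sub>R u i)
           has_sum tik_min (\<lambda>x. \<Sum>\<^sub>\<infinity>i\<in>I. (\<beta> i * inner (u i) x) *\<^sub>R v i) \<alpha> y) I"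
proof -
  define B where "B x = (\<Sum>\<^sub>\<infinity>i\<in>I. (\<beta> i * inner (u i) x) *\<^sub>R v i)" for x
  define c where "c i = \<beta> i / ((\<beta> i)\<^sup>2 + \<alpha>)" for i
  have c_bounded: "\<bar>c i\<bar> \<le> M / \<alpha>" if "i \<in> I" for i
  proof -
    have "\<bar>c i\<bar> \<le> \<bar>\<beta> i\<bar> / \<alpha>"
      unfolding c_def using \<open>0 < \<alpha>\<close> by (simp add: abs_div frac_le)
    also have "\<dots> \<le> M / \<alpha>"
      using bounded[OF that] \<open>0 < \<alpha>\<close> by (simp add: divide_right_mono)
    finally show ?thesis .
  qed
  have B: "((\<lambda>i. (\<beta> i * inner (u i) x) *\<^sub>R v i) has_sum B x) I" for x
    unfolding B_def by (rule has_sum_bounded_diagonal[OF u v bounded])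
  define x where "x = (\<Sum>\<^sub>\<infinity>i\<in>I. (c i * inner (v i) y) *\<^sub>R u i)"
  have x: "((\<lambda>i. (c i * inner (v i) y) *\<^sub>R u i) has_sum x) I"
    unfolding x_def by (rule has_sum_bounded_diagonal[OF v u c_bounded])
  have "tik_min B \<alpha> y = x"
  proof (rule tik_min_eqI[OF \<open>0 < \<alpha>\<close>])
    fix z
    have "((\<lambda>i. inner (B x - y) ((\<beta> i * inner (u i) z) *\<^sub>R v i)
                + \<alpha> * inner ((c i * inner (v i) y) *\<^sub>R u i) z)
           has_sum (inner (B x - y) (B z) + \<alpha> * inner x z)) I"
      by (intro has_sum_add has_sum_cmult_right has_sum_bounded_linear[OF bounded_linear_inner_right B]
          has_sum_bounded_linear[OF bounded_linear_inner_left x])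
    moreover have "inner (B x - y) ((\<beta> i * inner (u i) z) *\<^sub>R v i)
                + \<alpha> * inner ((c i * inner (v i) y) *\<^sub>R u i) z = 0" if i: "i \<in> I" for i
    proof -
      have "inner (v i) (B x) = \<beta> i * (c i * inner (v i) y)"
        using has_sum_orthonormal_coefficient[OF v B i] has_sum_orthonormal_coefficient[OF u x i]
        by simp
      then have residual: "inner (B x - y) (v i) = (\<beta> i * c i - 1) * inner (v i) y"
        by (simp add: inner_diff_left inner_commute[of _ "v i"] algebra_simps)
      have "c i * ((\<beta> i)\<^sup>2 + \<alpha>) = \<beta> i"
        unfolding c_def using \<open>0 < \<alpha>\<close> by (simp add: add_nonneg_pos order.strict_implies_not_eq[symmetric])
      moreover have "inner (B x - y) ((\<beta> i * inner (u i) z) *\<^sub>R v i)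
                + \<alpha> * inner ((c i * inner (v i) y) *\<^sub>R u i) z
          = inner (u i) z * inner (v i) y * (c i * ((\<beta> i)\<^sup>2 + \<alpha>) - \<beta> i)"
        by (simp only: inner_scaleR_right inner_scaleR_left residual)
          (simp add: algebra_simps power2_eq_square)
      ultimately show ?thesis
        by simp
    qed
    ultimately show "inner (B x - y) (B z) + \<alpha> * inner x z = 0"
      by (metis (no_types, lifting) has_sum_0 has_sum_cong has_sum_unique)
  qed
  with x show ?thesis
    unfolding B_def c_def by (simp add: inner_commute)
qed

lemma beta_discriminant_nonneg:
  assumes "0 \<le> \<alpha>" "2 * sqrt \<alpha> \<le> s"
  shows "0 \<le> s\<^sup>2 / 4 - \<alpha>"
proof -
  have "(2 * sqrt \<alpha>)\<^sup>2 \<le> s\<^sup>2"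
    using assms by (intro power_mono) auto
  then show ?thesis
    using assms(1) by (simp add: power_mult_distrib)
qed

lemma filt_div_eq_beta:
  assumes "0 < \<alpha>" "0 < s"
  shows "filt \<alpha> s / s = beta \<alpha> s / ((beta \<alpha> s)\<^sup>2 + \<alpha>)"
proof (cases "2 * sqrt \<alpha> \<le> s")
  case True
  have disc: "0 \<le> s\<^sup>2 / 4 - \<alpha>"
    using beta_discriminant_nonneg True assms(1) by simp
  then have "(beta \<alpha> s)\<^sup>2 + \<alpha> = s * beta \<alpha> s"
    using True unfolding beta_def by (simp add: power2_eq_square algebra_simps)
  moreover have "0 < beta \<alpha> s"
    using True disc assms(2) unfolding beta_def by (simp add: add_pos_nonneg)
  ultimately show ?thesis
    using True by (simp add: filt_def)
next
  case False
  then show ?thesis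
    using assms by (simp add: filt_def beta_def field_simps)
qed

lemma abs_beta_le:
  assumes "0 < \<alpha>" "0 < s"
  shows "\<bar>beta \<alpha> s\<bar> \<le> s + sqrt \<alpha>"
proof (cases "2 * sqrt \<alpha> \<le> s")
  case True
  have "0 \<le> sqrt (s\<^sup>2 / 4 - \<alpha>)"
    using beta_discriminant_nonneg True assms(1) by simp
  moreover have "sqrt (s\<^sup>2 / 4 - \<alpha>) \<le> sqrt (s\<^sup>2 / 4)"
    using assms by simp
  moreover have "sqrt (s\<^sup>2 / 4) = s / 2"
    using assms by (simp add: real_sqrt_divide)
  moreover have "beta \<alpha> s = s / 2 + sqrt (s\<^sup>2 / 4 - \<alpha>)"
    using True by (simp add: beta_def)
  ultimately show ?thesis
    using real_sqrt_ge_zero[of \<alpha>] assms by linarith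
next
  case False
  then show ?thesis
    using assms by (simp add: beta_def)
qed

lemma singular_value_le_onorm:
  assumes "bounded_linear A" "singular_system A I \<sigma> u v" "i \<in> I"
  shows "\<sigma> i \<le> onorm A"
proof -
  have "norm (u i) = 1" "norm (v i) = 1" "0 < \<sigma> i" "A (u i) = \<sigma> i *\<^sub>R v i"
    using assms(2,3) unfolding singular_system_def by (auto simp: norm_eq_sqrt_inner)
  then show ?thesis
    using onorm[OF assms(1), of "u i"] by simp
qed

lemma has_sum_K_op:
  fixes A :: "'a::{real_inner, complete_space} \<Rightarrow> 'b::{real_inner, complete_space}"
  assumes "bounded_linear A" and system: "singular_system A I \<sigma> u v" and "0 < \<alpha>"
  shows "((\<lambda>i. (filt \<alpha> (\<sigma> i) / \<sigma> i * inner y (v i)) *\<^sub>R u i) has_sum K_op I \<sigma> u v \<alpha> y) I"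
proof -
  have u: "orthonormal_on u I" and v: "orthonormal_on v I" and \<sigma>_pos: "\<And>i. i \<in> I \<Longrightarrow> 0 < \<sigma> i"
    using system unfolding singular_system_def orthonormal_on_def by auto
  have "\<bar>beta \<alpha> (\<sigma> i)\<bar> \<le> onorm A + sqrt \<alpha>" if "i \<in> I" for i
    using abs_beta_le[OF \<open>0 < \<alpha>\<close> \<sigma>_pos[OF that]] singular_value_le_onorm[OF assms(1) system that]
    by linarith
  from tik_min_diagonal_operator[OF u v this \<open>0 < \<alpha>\<close>, where y = y]
  have "((\<lambda>i. (beta \<alpha> (\<sigma> i) / ((beta \<alpha> (\<sigma> i))\<^sup>2 + \<alpha>) * inner y (v i)) *\<^sub>R u i)
          has_sum K_op I \<sigma> u v \<alpha> y) I"
    unfolding K_op_def B_op_def[abs_def] .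
  then show ?thesis
    by (rule has_sum_cong[THEN iffD1, rotated]) (simp add: filt_div_eq_beta[OF \<open>0 < \<alpha>\<close> \<sigma>_pos])
qed

definition order_optimal_filter :: "(real \<Rightarrow> real \<Rightarrow> real) \<Rightarrow> real \<Rightarrow> bool" where
  "order_optimal_filter F \<nu> \<longleftrightarrow> (\<exists>\<gamma>>0. \<exists>c1>0. \<exists>c2>0. \<exists>c3>0. \<forall>\<alpha>>0.
       (\<forall>s>0. \<bar>F \<alpha> s / s\<bar> \<le> c1 * \<alpha> powr (- \<gamma>))
     \<and> bdd_above ((\<lambda>s. \<bar>1 - F \<alpha> s\<bar> * s powr \<nu>) ` {0<..})
     \<and> (SUP s\<in>{0<..}. \<bar>1 - F \<alpha> s\<bar> * s powr \<nu>) < c2 * \<alpha> powr (\<gamma> * \<nu>)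
     \<and> (\<forall>s>0. \<bar>F \<alpha> s\<bar> \<le> c3))"

lemma order_optimal_filterI:
  assumes "0 < \<gamma>" "0 < c1" "0 \<le> c2" "0 < c3"
    and quotient: "\<And>\<alpha> s. 0 < \<alpha> \<Longrightarrow> 0 < s \<Longrightarrow> \<bar>F \<alpha> s / s\<bar> \<le> c1 * \<alpha> powr (- \<gamma>)"
    and residual: "\<And>\<alpha> s. 0 < \<alpha> \<Longrightarrow> 0 < s \<Longrightarrow> \<bar>1 - F \<alpha> s\<bar> * s powr \<nu> \<le> c2 * \<alpha> powr (\<gamma> * \<nu>)"
    and bounded: "\<And>\<alpha> s. 0 < \<alpha> \<Longrightarrow> 0 < s \<Longrightarrow> \<bar>F \<alpha> s\<bar> \<le> c3"
  shows "order_optimal_filter F \<nu>"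
proof -
  have "bdd_above ((\<lambda>s. \<bar>1 - F \<alpha> s\<bar> * s powr \<nu>) ` {0<..})
      \<and> (SUP s\<in>{0<..}. \<bar>1 - F \<alpha> s\<bar> * s powr \<nu>) < (c2 + 1) * \<alpha> powr (\<gamma> * \<nu>)" if "0 < \<alpha>" for \<alpha>
  proof
    show "bdd_above ((\<lambda>s. \<bar>1 - F \<alpha> s\<bar> * s powr \<nu>) ` {0<..})"
      using residual[OF that] by (intro bdd_aboveI2) auto
    have "(SUP s\<in>{0<..}. \<bar>1 - F \<alpha> s\<bar> * s powr \<nu>) \<le> c2 * \<alpha> powr (\<gamma> * \<nu>)"
      using residual[OF that] by (intro cSUP_least) auto
    also have "\<dots> < (c2 + 1) * \<alpha> powr (\<gamma> * \<nu>)"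
      using that by (simp add: distrib_right)
    finally show "(SUP s\<in>{0<..}. \<bar>1 - F \<alpha> s\<bar> * s powr \<nu>) < (c2 + 1) * \<alpha> powr (\<gamma> * \<nu>)" .
  qed
  then have "\<forall>\<alpha>>0. (\<forall>s>0. \<bar>F \<alpha> s / s\<bar> \<le> c1 * \<alpha> powr (- \<gamma>))
     \<and> bdd_above ((\<lambda>s. \<bar>1 - F \<alpha> s\<bar> * s powr \<nu>) ` {0<..})
     \<and> (SUP s\<in>{0<..}. \<bar>1 - F \<alpha> s\<bar> * s powr \<nu>) < (c2 + 1) * \<alpha> powr (\<gamma> * \<nu>)
     \<and> (\<forall>s>0. \<bar>F \<alpha> s\<bar> \<le> c3)"
    using quotient bounded by simp
  moreover have "0 < c2 + 1"
    using \<open>0 \<le> c2\<close> by simp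
  ultimately show ?thesis
    unfolding order_optimal_filter_def using \<open>0 < \<gamma>\<close> \<open>0 < c1\<close> \<open>0 < c3\<close> by blast
qed

lemma abs_filt_le_one:
  assumes "0 \<le> s"
  shows "\<bar>filt \<alpha> s\<bar> \<le> 1"
proof (cases "2 * sqrt \<alpha> \<le> s")
  case False
  with assms have "0 < sqrt \<alpha>"
    by linarith
  with False assms show ?thesis
    by (simp add: filt_def)
qed (simp add: filt_def)

lemma abs_filt_div_le:
  assumes "0 < \<alpha>" "0 < s"
  shows "\<bar>filt \<alpha> s / s\<bar> \<le> 1 / (2 * sqrt \<alpha>)"
proof (cases "2 * sqrt \<alpha> \<le> s")
  case True
  with assms show ?thesis
    by (simp add: filt_def frac_le)
next
  case False
  with assms show ?thesis
    by (simp add: filt_def)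
qed

lemma filt_residual_le:
  assumes "0 \<le> \<nu>" "0 \<le> s"
  shows "\<bar>1 - filt \<alpha> s\<bar> * s powr \<nu> \<le> (2 * sqrt \<alpha>) powr \<nu>"
proof (cases "2 * sqrt \<alpha> \<le> s")
  case True
  then show ?thesis
    by (simp add: filt_def)
next
  case False
  with assms have "0 < sqrt \<alpha>"
    by linarith
  with False assms have "\<bar>1 - filt \<alpha> s\<bar> \<le> 1" and "s powr \<nu> \<le> (2 * sqrt \<alpha>) powr \<nu>"
    by (auto simp: filt_def intro: powr_mono2)
  then have "\<bar>1 - filt \<alpha> s\<bar> * s powr \<nu> \<le> 1 * (2 * sqrt \<alpha>) powr \<nu>"
    by (intro mult_mono) auto
  then show ?thesis
    by simp
qed

lemma filt_order_optimal:
  assumes "0 < \<nu>"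
  shows "order_optimal_filter filt \<nu>"
proof (rule order_optimal_filterI[where \<gamma> = "1/2" and ?c1.0 = 1 and ?c2.0 = "2 powr \<nu>" and ?c3.0 = 1])
  fix \<alpha> s :: real
  assume "0 < \<alpha>" "0 < s"
  have sqrt_powr: "sqrt \<alpha> = \<alpha> powr (1/2)"
    using \<open>0 < \<alpha>\<close> by (simp add: powr_half_sqrt)
  have "\<bar>filt \<alpha> s / s\<bar> \<le> 1 / (2 * sqrt \<alpha>)"
    by (rule abs_filt_div_le[OF \<open>0 < \<alpha>\<close> \<open>0 < s\<close>])
  also have "\<dots> \<le> 1 * \<alpha> powr (- (1/2))"
    using \<open>0 < \<alpha>\<close> by (simp add: sqrt_powr powr_minus_divide frac_le)
  finally show "\<bar>filt \<alpha> s / s\<bar> \<le> 1 * \<alpha> powr (- (1/2))" .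
  have "\<bar>1 - filt \<alpha> s\<bar> * s powr \<nu> \<le> (2 * sqrt \<alpha>) powr \<nu>"
    using assms \<open>0 < s\<close> by (simp add: filt_residual_le)
  also have "\<dots> = 2 powr \<nu> * \<alpha> powr (1/2 * \<nu>)"
    using \<open>0 < \<alpha>\<close> by (simp add: powr_mult sqrt_powr powr_powr)
  finally show "\<bar>1 - filt \<alpha> s\<bar> * s powr \<nu> \<le> 2 powr \<nu> * \<alpha> powr (1/2 * \<nu>)" .
  show "\<bar>filt \<alpha> s\<bar> \<le> 1"
    using \<open>0 < s\<close> by (simp add: abs_filt_le_one)
qed simp_all

theorem theorem2:
  fixes A :: "'a::{real_inner, complete_space} \<Rightarrow> 'b::{real_inner, complete_space}"
    and I :: "'i set" and \<sigma> :: "'i \<Rightarrow> real" and u :: "'i \<Rightarrow> 'a" and v :: "'i \<Rightarrow> 'b"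
  assumes "compact_operator A"
    and "singular_system A I \<sigma> u v"
  shows "(\<forall>\<alpha>>0. \<forall>y. ((\<lambda>i. (filt \<alpha> (\<sigma> i) / \<sigma> i * inner y (v i)) *\<^sub>R u i)
                          has_sum K_op I \<sigma> u v \<alpha> y) I)
       \<and> (\<forall>\<nu>>0. \<exists>\<gamma>>0. \<exists>c1>0. \<exists>c2>0. \<exists>c3>0. \<forall>\<alpha>>0.
            (\<forall>s>0. \<bar>filt \<alpha> s / s\<bar> \<le> c1 * \<alpha> powr (- \<gamma>))
          \<and> bdd_above ((\<lambda>s. \<bar>1 - filt \<alpha> s\<bar> * s powr \<nu>) ` {0<..})
          \<and> (SUP s\<in>{0<..}. \<bar>1 - filt \<alpha> s\<bar> * s powr \<nu>) < c2 * \<alpha> powr (\<gamma> * \<nu>)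
          \<and> (\<forall>s>0. \<bar>filt \<alpha> s\<bar> \<le> c3))"
proof -
  have "bounded_linear A"
    using assms(1) by (simp add: compact_operator_def)
  then show ?thesis
    unfolding order_optimal_filter_def[symmetric]
    using has_sum_K_op[OF _ assms(2)] filt_order_optimal by simp
qed

end
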